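(* Let $A,B\in\widehat{\mathbb F_q^\times}$ be such that each of $A$, $B$, $AB$, $A\overline B$ has order larger than $2$. Then for all $z\in\mathbb F_q$, $${}_2\mathbb F_1\!\left[\begin{matrix}A&A\phi\\&A^2\end{matrix};z\right]{}_2\mathbb F_1\!\left[\begin{matrix}B&B\phi\\&B^2\end{matrix};z\right]={}_2\mathbb F_1\!\left[\begin{matrix}AB&AB\phi\\&(AB)^2\end{matrix};z\right]+\overline B^2\!\left(\tfrac z4\right){}_2\mathbb F_1\!\left[\begin{matrix}A\overline B&A\overline B\phi\\&(A\overline B)^2\end{matrix};z\right]-\delta(1-z)AB(4),$$ $${}_2\mathbb F_1\!\left[\begin{matrix}A&A\phi\\&\phi\end{matrix};z\right]{}_2\mathbb F_1\!\left[\begin{matrix}B&B\phi\\&\phi\end{matrix};z\right]={}_2\mathbb F_1\!\left[\begin{matrix}AB&AB\phi\\&\phi\end{matrix};z\right]+\overline B^2(1-z)\,{}_2\mathbb F_1\!\left[\begin{matrix}A\overline B&A\overline B\phi\\&\phi\end{matrix};z\right]-\delta(z).$$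
   Context: $\mathbb F_q$ is a finite field with $q$ elements, $q$ a power of an odd prime $p$. $\widehat{\mathbb F_q^\times}$ is the group of multiplicative characters $\chi:\mathbb F_q^\times\to\mathbb C^\times$; every character, including the trivial character $\varepsilon$, is extended to $\mathbb F_q$ by $\chi(0)=0$. $\phi$ is the quadratic character, $\overline\chi$ denotes the complex-conjugate (inverse) character, and products/powers of characters are pointwise. For $x\in\mathbb F_q$, $\delta(x)=1$ if $x=0$ and $0$ otherwise. Jacobi sum: $J(A,B)=\sum_{x\in\mathbb F_q}A(x)B(1-x)$. Period function: ${}_2\mathbb P_1\!\left[\begin{matrix}A&B\\&C\end{matrix};\lambda\right]=\sum_{y\in\mathbb F_q}B(y)\,\overline BC(1-y)\,\overline A(1-\lambda y)$; normalized function ${}_2\mathbb F_1\!\left[\begin{matrix}A&B\\&C\end{matrix};\lambda\right]=\frac{1}{J(B,C\overline B)}\,{}_2\mathbb P_1\!\left[\begin{matrix}A&B\\&C\end{matrix};\lambda\right]$. *)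

theory Defs
  imports Complex_Main
begin

text \<open>Finite field: a type of class finite and field; odd characteristic is
  expressed by 2 \<noteq> 0. Multiplicative characters are functions
  F \<Rightarrow> complex, extended by \<chi>(0) = 0.\<close>

definition mult_char :: "('a::{finite,field} \<Rightarrow> complex) \<Rightarrow> bool" where
  "mult_char \<chi> \<longleftrightarrow> \<chi> 0 = 0 \<and> (\<forall>x. x \<noteq> 0 \<longrightarrow> \<chi> x \<noteq> 0) \<and>
     (\<forall>x y. x \<noteq> 0 \<longrightarrow> y \<noteq> 0 \<longrightarrow> \<chi> (x * y) = \<chi> x * \<chi> y)"

definition char_order :: "('a::{finite,field} \<Rightarrow> complex) \<Rightarrow> nat" where
  "char_order \<chi> = (LEAST n. n > 0 \<and> (\<forall>x. x \<noteq> 0 \<longrightarrow> \<chi> x ^ n = 1))"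

definition char_mult :: "('a \<Rightarrow> complex) \<Rightarrow> ('a \<Rightarrow> complex) \<Rightarrow> 'a \<Rightarrow> complex" where
  "char_mult A B = (\<lambda>x. A x * B x)"

definition char_conj :: "('a \<Rightarrow> complex) \<Rightarrow> 'a \<Rightarrow> complex" where
  "char_conj A = (\<lambda>x. cnj (A x))"

definition char_pow :: "('a \<Rightarrow> complex) \<Rightarrow> nat \<Rightarrow> 'a \<Rightarrow> complex" where
  "char_pow A n = (\<lambda>x. A x ^ n)"

definition qchar :: "'a::{finite,field} \<Rightarrow> complex" where
  "qchar x = (if x = 0 then 0 else if (\<exists>y. y ^ 2 = x) then 1 else -1)"

definition kdelta :: "'a::{finite,field} \<Rightarrow> complex" where
  "kdelta x = (if x = 0 then 1 else 0)"

definition jacobi :: "('a::{finite,field} \<Rightarrow> complex) \<Rightarrow> ('a \<Rightarrow> complex) \<Rightarrow> complex" where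
  "jacobi A B = (\<Sum>x\<in>UNIV. A x * B (1 - x))"

definition P21 :: "('a::{finite,field} \<Rightarrow> complex) \<Rightarrow> ('a \<Rightarrow> complex) \<Rightarrow> ('a \<Rightarrow> complex) \<Rightarrow> 'a \<Rightarrow> complex" where
  "P21 A B C lam = (\<Sum>y\<in>UNIV. B y * char_mult (char_conj B) C (1 - y) * char_conj A (1 - lam * y))"

definition F21 :: "('a::{finite,field} \<Rightarrow> complex) \<Rightarrow> ('a \<Rightarrow> complex) \<Rightarrow> ('a \<Rightarrow> complex) \<Rightarrow> 'a \<Rightarrow> complex" where
  "F21 A B C lam = P21 A B C lam / jacobi B (char_mult C (char_conj B))"

end

theory Submission
  imports Defs
begin

text \<open>
  If a character \<open>A\<close> is neither trivial nor quadratic, both normalized functions are sums over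
  the square roots \<open>w\<close> of their argument: \<open>F[A, A\<phi>; \<phi>; z]\<close> is the sum of \<open>A(1 + w)\<^sup>-\<^sup>2\<close> over
  \<open>w\<^sup>2 = z\<close>, and \<open>F[A, A\<phi>; A\<^sup>2; z]\<close> is the sum of \<open>A((1 + w)/2)\<^sup>-\<^sup>2\<close> over \<open>w\<^sup>2 = 1 - z\<close>.
  For \<open>z = w\<^sup>2\<close>, substituting \<open>y = t/w\<close> in the period leaves a sum over \<open>t\<close> that depends on \<open>t\<close>
  only through \<open>\<phi>(t)\<close> and \<open>m = t + 1/t\<close>; summing \<open>\<phi>\<close> over the fibres of \<open>t \<mapsto> t + 1/t\<close> gives
  \<open>\<phi>(m + 2) + \<phi>(m - 2)\<close>, and the two resulting sums are the normalizing Jacobi sum times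
  \<open>A(1 \<plusminus> w)\<^sup>-\<^sup>2\<close>. For nonsquare \<open>z\<close> the period is odd under \<open>y \<mapsto> 1/(zy)\<close>, hence zero. The
  second closed form follows from the first by the involution \<open>y \<mapsto> y/(y - 1)\<close>.
  With the closed forms, both product formulas reduce to
  \<open>(a\<^sub>1 + a\<^sub>2)(b\<^sub>1 + b\<^sub>2) = a\<^sub>1b\<^sub>1 + a\<^sub>2b\<^sub>2 + (a\<^sub>1b\<^sub>2 + a\<^sub>2b\<^sub>1)\<close> over the at most two roots, the cross
  terms forming the \<open>A/B\<close> function. The order hypotheses only serve to make every character
  involved neither trivial nor quadratic, so that the normalizing Jacobi sum, of absolute value
  \<open>\<surd>q\<close>, does not vanish.
\<close>

section \<open>Multiplicative characters\<close>

lemma card_field_ge_2: "card (UNIV :: 'a::{finite,field} set) \<ge> 2"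
proof -
  have "card {0::'a, 1} \<le> card (UNIV :: 'a set)" by (rule card_mono) auto
  thus ?thesis by simp
qed

lemma field_power_card_minus_one:
  fixes x :: "'a::{finite,field}"
  assumes "x \<noteq> 0"
  shows "x ^ (card (UNIV :: 'a set) - 1) = 1"
proof -
  let ?U = "UNIV - {0::'a}"
  have "prod (\<lambda>y. x * y) ?U = prod id ?U"
    by (rule prod.reindex_bij_witness[where i="\<lambda>y. inverse x * y" and j="\<lambda>y. x * y"])
       (use assms in \<open>auto simp: field_simps\<close>)
  moreover have "prod (\<lambda>y. x * y) ?U = x ^ card ?U * prod id ?U"
    by (simp add: prod.distrib)
  moreover have "prod id ?U \<noteq> 0" by simp
  moreover have "card ?U = card (UNIV :: 'a set) - 1" by (simp add: card_Diff_singleton)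
  ultimately show ?thesis by (metis mult_cancel_right2)
qed

lemma mult_char_zero [simp]: "mult_char \<chi> \<Longrightarrow> \<chi> 0 = 0"
  by (simp add: mult_char_def)

lemma mult_char_nonzero: "mult_char \<chi> \<Longrightarrow> x \<noteq> 0 \<Longrightarrow> \<chi> x \<noteq> 0"
  by (simp add: mult_char_def)

lemma mult_char_mult [simp]: "mult_char \<chi> \<Longrightarrow> \<chi> (x * y) = \<chi> x * \<chi> y"
  by (cases "x = 0 \<or> y = 0") (auto simp: mult_char_def)

lemma mult_char_one [simp]:
  assumes "mult_char \<chi>" shows "\<chi> 1 = 1"
proof -
  have "\<chi> 1 * \<chi> 1 = \<chi> 1 * 1" using mult_char_mult[OF assms, of 1 1] by simp
  thus ?thesis using mult_char_nonzero[OF assms, of 1] by simp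
qed

lemma mult_char_inverse: "mult_char \<chi> \<Longrightarrow> x \<noteq> 0 \<Longrightarrow> \<chi> (inverse x) * \<chi> x = 1"
  by (metis mult_char_mult mult_char_one left_inverse)

lemma mult_char_power: "mult_char \<chi> \<Longrightarrow> \<chi> (x ^ n) = \<chi> x ^ n"
  by (induction n) auto

lemma mult_char_minus_one_squared: "mult_char \<chi> \<Longrightarrow> \<chi> (-1) * \<chi> (-1) = 1"
  using mult_char_mult[of \<chi> "-1" "-1"] by simp

lemma norm_mult_char:
  fixes \<chi> :: "'a::{finite,field} \<Rightarrow> complex"
  assumes "mult_char \<chi>" and "x \<noteq> 0"
  shows "norm (\<chi> x) = 1"
proof -
  let ?n = "card (UNIV :: 'a set) - 1"
  have "\<chi> x ^ ?n = 1"
    using mult_char_power[OF assms(1), of x ?n] field_power_card_minus_one[OF assms(2)] assms(1) by simp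
  hence "norm (\<chi> x) ^ ?n = 1 ^ ?n" by (simp flip: norm_power)
  moreover have "?n > 0" using card_field_ge_2[where 'a='a] by simp
  ultimately show ?thesis using power_eq_imp_eq_base[of "norm (\<chi> x)" ?n 1] by simp
qed

lemma cnj_mult_char:
  fixes \<chi> :: "'a::{finite,field} \<Rightarrow> complex"
  assumes m: "mult_char \<chi>"
  shows "cnj (\<chi> x) = \<chi> (inverse x)"
proof (cases "x = 0")
  case False
  have "\<chi> x * cnj (\<chi> x) = 1"
    using complex_norm_square[of "\<chi> x"] norm_mult_char[OF m False] by simp
  moreover have "\<chi> x * \<chi> (inverse x) = 1" using mult_char_inverse[OF m False] by (simp add: mult.commute)
  ultimately show ?thesis using mult_char_nonzero[OF m False] by (metis mult_left_cancel)
qed (use m in simp)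

lemma mult_char_char_mult: "mult_char \<chi> \<Longrightarrow> mult_char \<psi> \<Longrightarrow> mult_char (char_mult \<chi> \<psi>)"
  unfolding mult_char_def char_mult_def by auto

lemma mult_char_char_conj: "mult_char \<chi> \<Longrightarrow> mult_char (char_conj \<chi>)"
  unfolding mult_char_def char_conj_def by auto

lemma mult_char_compose_inverse: "mult_char \<chi> \<Longrightarrow> mult_char (\<lambda>x. \<chi> (inverse x))"
  unfolding mult_char_def by auto

definition nontrivial_char :: "('a::{finite,field} \<Rightarrow> complex) \<Rightarrow> bool" where
  "nontrivial_char \<chi> \<longleftrightarrow> (\<exists>a. a \<noteq> 0 \<and> \<chi> a \<noteq> 1)"

lemma sum_mult_char_eq_0:
  fixes \<chi> :: "'a::{finite,field} \<Rightarrow> complex"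
  assumes m: "mult_char \<chi>" and "nontrivial_char \<chi>"
  shows "(\<Sum>x\<in>UNIV. \<chi> x) = 0"
proof -
  obtain a where a: "a \<noteq> 0" "\<chi> a \<noteq> 1" using assms(2) by (auto simp: nontrivial_char_def)
  have "(\<Sum>x\<in>UNIV. \<chi> x) = (\<Sum>x\<in>UNIV. \<chi> (a * x))"
    by (rule sum.reindex_bij_witness[where j="\<lambda>y. inverse a * y" and i="\<lambda>y. a * y"])
       (use a in \<open>auto simp: field_simps\<close>)
  also have "\<dots> = \<chi> a * (\<Sum>x\<in>UNIV. \<chi> x)" using m by (simp add: sum_distrib_left)
  finally show ?thesis using a(2) by (metis mult_cancel_right1)
qed

lemma char_conj_eq_compose_inverse:
  "mult_char \<chi> \<Longrightarrow> char_conj \<chi> x = \<chi> (inverse x)"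
  unfolding char_conj_def by (rule cnj_mult_char)

lemma nontrivial_char_compose_inverse:
  assumes "mult_char \<chi>" "nontrivial_char \<chi>"
  shows "nontrivial_char (\<lambda>x. \<chi> (inverse x))"
proof -
  obtain a where "a \<noteq> 0" "\<chi> a \<noteq> 1" using assms(2) by (auto simp: nontrivial_char_def)
  with mult_char_inverse[OF assms(1)] have "inverse a \<noteq> 0 \<and> \<chi> (inverse (inverse a)) \<noteq> 1" by auto
  thus ?thesis unfolding nontrivial_char_def by blast
qed

section \<open>The quadratic character\<close>

definition is_square :: "'a::field \<Rightarrow> bool" where
  "is_square x \<longleftrightarrow> (\<exists>y. y ^ 2 = x)"

lemma qchar_eq: "qchar x = (if x = 0 then 0 else if is_square x then 1 else -1)"
  by (simp add: qchar_def is_square_def)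

lemma square_roots_of_square: "{y. y ^ 2 = r ^ 2} = {r, - r :: 'a::field}"
  using power2_eq_iff[of _ r] by blast

lemma neg_neq_self:
  fixes r :: "'a::field"
  assumes "(2::'a) \<noteq> 0" "r \<noteq> 0"
  shows "- r \<noteq> r"
proof
  assume "- r = r"
  hence "2 * r = 0" by (metis mult_2 neg_eq_iff_add_eq_0)
  thus False using assms by simp
qed

lemma is_square_mult_square_iff:
  fixes x y :: "'a::field"
  assumes "is_square x" "x \<noteq> 0"
  shows "is_square (x * y) \<longleftrightarrow> is_square y"
proof -
  obtain r where r: "r ^ 2 = x" using assms(1) by (auto simp: is_square_def)
  with assms(2) have "r \<noteq> 0" by auto
  have "(u / r) ^ 2 = y" if "u ^ 2 = x * y" for u
    using that r \<open>r \<noteq> 0\<close> assms(2) by (simp add: power_divide)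
  moreover have "(r * v) ^ 2 = x * y" if "v ^ 2 = y" for v
    using that r by (simp add: power_mult_distrib)
  ultimately show ?thesis unfolding is_square_def by blast
qed

lemma card_nonzero_eq_twice_card_squares:
  assumes two: "(2::'a::{finite,field}) \<noteq> 0"
  shows "card (UNIV - {0::'a}) = 2 * card {x::'a. x \<noteq> 0 \<and> is_square x}"
proof -
  let ?U = "UNIV - {0::'a}" and ?Q = "{x::'a. x \<noteq> 0 \<and> is_square x}"
  have "(\<Sum>q\<in>?Q. \<Sum>y\<in>{y\<in>?U. y ^ 2 = q}. 1::nat) = (\<Sum>y\<in>?U. 1)"
    by (rule sum.group) (auto simp: is_square_def)
  moreover have "(\<Sum>y\<in>{y\<in>?U. y ^ 2 = q}. 1::nat) = 2" if "q \<in> ?Q" for q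
  proof -
    from that obtain r where r: "r ^ 2 = q" unfolding is_square_def by blast
    with that have "r \<noteq> 0" by auto
    hence "{y\<in>?U. y ^ 2 = q} = {r, - r}" using square_roots_of_square[of r] r by auto
    thus ?thesis using neg_neq_self[OF two \<open>r \<noteq> 0\<close>] by simp
  qed
  ultimately show ?thesis by simp
qed

text \<open>Multiplication by a nonsquare maps the nonzero squares injectively into the nonsquares;
  both sets have the same size, so it is onto.\<close>
lemma is_square_mult_nonsquares:
  fixes a b :: "'a::{finite,field}"
  assumes two: "(2::'a) \<noteq> 0" and a: "a \<noteq> 0" "\<not> is_square a" and b: "b \<noteq> 0" "\<not> is_square b"
  shows "is_square (a * b)"
proof -
  let ?Q = "{x::'a. x \<noteq> 0 \<and> is_square x}" and ?N = "{x::'a. x \<noteq> 0 \<and> \<not> is_square x}"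
  have "UNIV - {0::'a} = ?Q \<union> ?N" by auto
  hence "card (UNIV - {0::'a}) = card ?Q + card ?N"
    by (metis (no_types, lifting) card_Un_disjoint disjoint_iff finite mem_Collect_eq)
  hence card_N: "card ?N = card ?Q" using card_nonzero_eq_twice_card_squares[OF two] by simp
  have "(\<lambda>s. a * s) ` ?Q \<subseteq> ?N"
    using a is_square_mult_square_iff[of _ a] by (auto simp: mult.commute)
  moreover have "card ((\<lambda>s. a * s) ` ?Q) = card ?N"
    using a card_N by (simp add: card_image inj_on_def)
  ultimately have "(\<lambda>s. a * s) ` ?Q = ?N" by (simp add: card_subset_eq)
  then obtain s where s: "is_square s" "s \<noteq> 0" "b = a * s" using b by blast
  have "is_square (a * a)" unfolding is_square_def by (metis power2_eq_square)
  hence "is_square (a * a * s)" using a(1) s(1) is_square_mult_square_iff[of "a * a" s] by simp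
  thus ?thesis using s(3) by (simp add: mult.assoc)
qed

lemma exists_nonsquare:
  assumes two: "(2::'a::{finite,field}) \<noteq> 0"
  shows "\<exists>a::'a. a \<noteq> 0 \<and> \<not> is_square a"
proof (rule ccontr)
  assume "\<not> ?thesis"
  hence "{x::'a. x \<noteq> 0 \<and> is_square x} = UNIV - {0}" by auto
  hence "card (UNIV - {0::'a}) = 0" using card_nonzero_eq_twice_card_squares[OF two] by simp
  moreover have "(1::'a) \<in> UNIV - {0}" by simp
  ultimately show False by (metis card_0_eq empty_iff finite)
qed

lemma mult_char_qchar:
  assumes two: "(2::'a::{finite,field}) \<noteq> 0"
  shows "mult_char (qchar :: 'a \<Rightarrow> complex)"
  unfolding mult_char_def
proof (intro conjI allI impI)
  fix x y :: 'a assume x: "x \<noteq> 0" and y: "y \<noteq> 0"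
  have "is_square (x * y) \<longleftrightarrow> (is_square x \<longleftrightarrow> is_square y)"
  proof (cases "is_square x")
    case False
    show ?thesis
    proof (cases "is_square y")
      case True
      thus ?thesis using False is_square_mult_square_iff[OF True y, of x] by (simp add: mult.commute)
    qed (use False is_square_mult_nonsquares[OF two x _ y] in simp)
  qed (use is_square_mult_square_iff[OF _ x] in simp)
  thus "qchar (x * y) = qchar x * (qchar y :: complex)" using x y by (auto simp: qchar_eq)
qed (auto simp: qchar_eq)

lemma qchar_zero [simp]: "qchar 0 = 0"
  by (simp add: qchar_def)

lemma qchar_square [simp]: "y \<noteq> 0 \<Longrightarrow> qchar (y ^ 2) = 1"
  by (auto simp: qchar_eq is_square_def)

lemma cnj_qchar [simp]: "cnj (qchar x) = qchar x"
  by (simp add: qchar_def)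

lemma qchar_times_self: "x \<noteq> 0 \<Longrightarrow> qchar x * qchar x = 1"
  by (auto simp: qchar_eq)

lemma is_square_inverse_iff: "is_square (inverse x) \<longleftrightarrow> is_square (x::'a::field)"
  unfolding is_square_def by (metis inverse_inverse_eq power_inverse)

lemma qchar_inverse [simp]: "qchar (inverse x) = qchar x"
  by (simp add: qchar_eq is_square_inverse_iff)

lemma of_nat_card_square_roots:
  assumes two: "(2::'a::{finite,field}) \<noteq> 0"
  shows "of_nat (card {w::'a. w ^ 2 = v}) = 1 + (qchar v :: complex)"
proof -
  consider "v = 0" | u where "u ^ 2 = v" "u \<noteq> 0" | "\<not> is_square v"
    unfolding is_square_def by fastforce
  thus ?thesis
  proof cases
    case 2
    hence "card {w. w ^ 2 = v} = 2"
      using square_roots_of_square[of u] neg_neq_self[OF two, of u] by auto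
    thus ?thesis using 2 by (auto simp: qchar_eq is_square_def)
  next
    case 3
    hence "{w. w ^ 2 = v} = {}" by (auto simp: is_square_def)
    thus ?thesis using 3 by (auto simp: qchar_eq)
  qed simp
qed

lemma reciprocal_sum_eq_iff:
  fixes t m :: "'a::field"
  shows "t \<noteq> 0 \<and> t + inverse t = m \<longleftrightarrow> t ^ 2 - m * t + 1 = 0"
  by (cases "t = 0") (auto simp: field_simps power2_eq_square)

lemma card_reciprocal_sum_fiber:
  assumes two: "(2::'a::{finite,field}) \<noteq> 0"
  shows "of_nat (card {t::'a. t \<noteq> 0 \<and> t + inverse t = m}) = 1 + (qchar (m ^ 2 - 4) :: complex)"
proof -
  let ?f = "\<lambda>t::'a. 2 * t - m"
  have "(4::'a) \<noteq> 0" using two mult_eq_0_iff[of "2::'a" 2] by simp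
  moreover have "(2 * t - m) ^ 2 = m ^ 2 - 4 \<longleftrightarrow> 4 * (t ^ 2 - m * t + 1) = 0" for t
    by (auto simp: algebra_simps power2_eq_square)
  ultimately have "(2 * t - m) ^ 2 = m ^ 2 - 4 \<longleftrightarrow> t ^ 2 - m * t + 1 = 0" for t
    by (simp only: mult_eq_0_iff) simp
  hence "{t. t \<noteq> 0 \<and> t + inverse t = m} = ?f -` {s. s ^ 2 = m ^ 2 - 4}"
    by (auto simp: reciprocal_sum_eq_iff)
  moreover have "inj ?f" using two by (auto intro: injI)
  moreover from this have "surj ?f" by (simp add: finite_UNIV_inj_surj)
  ultimately have "card {t. t \<noteq> 0 \<and> t + inverse t = m} = card {s::'a. s ^ 2 = m ^ 2 - 4}"
    by (simp only: card_vimage_inj subset_UNIV)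
  thus ?thesis by (simp add: of_nat_card_square_roots[OF two])
qed

text \<open>The weighted fibre count is uniform in \<open>m\<close>, including the degenerate fibre \<open>m = -2\<close>
  where \<open>qchar (m + 2)\<close> vanishes and the whole weight \<open>qchar (-1)\<close> sits in \<open>qchar (m - 2)\<close>.\<close>
lemma sum_qchar_reciprocal_sum_fiber:
  fixes m :: "'a::{finite,field}"
  assumes two: "(2::'a) \<noteq> 0"
  shows "(\<Sum>t | t \<noteq> 0 \<and> t + inverse t = m. qchar t) = qchar (m + 2) + (qchar (m - 2) :: complex)"
proof (cases "m = -2")
  case True
  have "t ^ 2 - m * t + 1 = (t + 1) ^ 2" for t :: 'a
    using True by (simp add: algebra_simps power2_eq_square)
  hence "{t. t \<noteq> 0 \<and> t + inverse t = m} = {-1}"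
    by (auto simp: reciprocal_sum_eq_iff eq_neg_iff_add_eq_0)
  moreover have "qchar (-4::'a) = (qchar (-1::'a) :: complex)"
    using mult_char_mult[OF mult_char_qchar[OF two], of "-1" "2 ^ 2"] qchar_square[OF two] by simp
  ultimately show ?thesis using True by simp
next
  case False
  hence m2: "m + 2 \<noteq> 0" by (simp add: eq_neg_iff_add_eq_0[symmetric])
  have "qchar t = (qchar (m + 2) :: complex)" if "t \<noteq> 0" "t + inverse t = m" for t :: 'a
  proof -
    have "m + 2 = (t + 1) ^ 2 * inverse t" using that by (auto simp: field_simps power2_eq_square)
    moreover have "t \<noteq> -1" using that False by auto
    hence "t + 1 \<noteq> 0" by (simp add: eq_neg_iff_add_eq_0[symmetric])
    ultimately show ?thesis using mult_char_qchar[OF two] by simp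
  qed
  hence "(\<Sum>t | t \<noteq> 0 \<and> t + inverse t = m. qchar t)
      = of_nat (card {t::'a. t \<noteq> 0 \<and> t + inverse t = m}) * (qchar (m + 2) :: complex)"
    by simp
  also have "\<dots> = qchar (m + 2) + qchar (m - 2) * (qchar (m + 2) * qchar (m + 2))"
    using mult_char_mult[OF mult_char_qchar[OF two], of "m - 2" "m + 2"]
    unfolding card_reciprocal_sum_fiber[OF two]
    by (simp add: algebra_simps power2_eq_square)
  finally show ?thesis using qchar_times_self[OF m2] by simp
qed

lemma sum_qchar_reciprocal_sum:
  fixes H :: "'a::{finite,field} \<Rightarrow> complex"
  assumes two: "(2::'a) \<noteq> 0"
  shows "(\<Sum>t\<in>UNIV - {0}. qchar t * H (t + inverse t)) = (\<Sum>m\<in>UNIV. (qchar (m + 2) + qchar (m - 2)) * H m)"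
proof -
  have "(\<Sum>t\<in>UNIV - {0}. qchar t * H (t + inverse t))
      = (\<Sum>m\<in>UNIV. \<Sum>t | t \<in> UNIV - {0} \<and> t + inverse t = m. qchar t * H (t + inverse t))"
    by (rule sum.group[symmetric]) auto
  also have "\<dots> = (\<Sum>m\<in>UNIV. (\<Sum>t | t \<noteq> 0 \<and> t + inverse t = m. qchar t) * H m)"
    by (simp add: sum_distrib_right)
  finally show ?thesis by (simp add: sum_qchar_reciprocal_sum_fiber[OF two])
qed

section \<open>Jacobi sums\<close>

lemma sum_mult_char_fractional_linear:
  fixes \<psi> :: "'a::{finite,field} \<Rightarrow> complex"
  assumes "mult_char \<psi>" "nontrivial_char \<psi>"
  shows "(\<Sum>y\<in>UNIV - {0,1}. \<psi> ((1 - t * y) / (1 - y)))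
           = (if t = 1 then of_nat (card (UNIV :: 'a set)) else 0) - 1 - \<psi> t"
proof (cases "t = 1")
  case True
  have "(\<Sum>y\<in>UNIV - {0,1::'a}. \<psi> ((1 - t * y) / (1 - y))) = of_nat (card (UNIV - {0,1::'a}))"
    using True assms(1) by simp
  also have "\<dots> = of_nat (card (UNIV :: 'a set)) - 2"
    using card_field_ge_2[where 'a='a] by (simp add: card_Diff_subset)
  finally show ?thesis using True assms(1) by simp
next
  case t: False
  have "(\<Sum>y\<in>UNIV - {0,1}. \<psi> ((1 - t * y) / (1 - y))) = (\<Sum>r\<in>UNIV - {1,t}. \<psi> r)"
  proof (rule sum.reindex_bij_witness[where i="\<lambda>r. (1 - r) / (t - r)" and j="\<lambda>y. (1 - t * y) / (1 - y)"])
    fix r assume r: "r \<in> UNIV - {1, t}"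
    hence nz: "t - r \<noteq> 0" "1 - r \<noteq> 0" "t - 1 \<noteq> 0" using t by auto
    thus "(1 - r) / (t - r) \<in> UNIV - {0, 1}" by (auto simp: field_simps)
    have "1 - t * ((1 - r) / (t - r)) = r * (t - 1) / (t - r)"
      and "1 - (1 - r) / (t - r) = (t - 1) / (t - r)"
      using nz by (simp_all add: field_simps)
    thus "(1 - t * ((1 - r) / (t - r))) / (1 - (1 - r) / (t - r)) = r" using nz by simp
  next
    fix y :: 'a assume y: "y \<in> UNIV - {0, 1}"
    hence nz: "1 - y \<noteq> 0" "y \<noteq> 0" "t - 1 \<noteq> 0" using t by auto
    thus "(1 - t * y) / (1 - y) \<in> UNIV - {1, t}" by (auto simp: field_simps)
    have "1 - (1 - t * y) / (1 - y) = y * (t - 1) / (1 - y)"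
      and "t - (1 - t * y) / (1 - y) = (t - 1) / (1 - y)"
      using nz by (simp_all add: field_simps)
    thus "(1 - (1 - t * y) / (1 - y)) / (t - (1 - t * y) / (1 - y)) = y" using nz by simp
  qed auto
  also have "\<dots> = (\<Sum>r\<in>UNIV. \<psi> r) - \<psi> 1 - \<psi> t"
    using t by (simp add: sum_diff)
  finally show ?thesis using sum_mult_char_eq_0 assms t by simp
qed

lemma jacobi_times_char_values:
  fixes \<chi> \<psi> :: "'a::{finite,field} \<Rightarrow> complex"
  assumes m: "mult_char \<chi>" "mult_char \<psi>" and y: "y \<noteq> 0"
  shows "jacobi \<chi> \<psi> * (\<chi> (inverse y) * \<psi> (inverse (1 - y)))
       = (\<Sum>t\<in>UNIV. \<chi> t * \<psi> ((1 - t * y) / (1 - y)))"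
proof -
  have "jacobi \<chi> \<psi> * (\<chi> (inverse y) * \<psi> (inverse (1 - y)))
      = (\<Sum>t\<in>UNIV. \<chi> (t * y) * \<psi> (1 - t * y) * (\<chi> (inverse y) * \<psi> (inverse (1 - y))))"
    unfolding jacobi_def sum_distrib_right
    by (rule sum.reindex_bij_witness[where i="\<lambda>x. x * y" and j="\<lambda>x. x / y"]) (use y in auto)
  also have "\<dots> = (\<Sum>t\<in>UNIV. \<chi> t * \<psi> ((1 - t * y) / (1 - y)))"
  proof (rule sum.cong[OF refl])
    fix t
    have \<chi>: "\<chi> (t * y) * \<chi> (inverse y) = \<chi> t"
      using mult_char_inverse[OF m(1) y] m(1) by (simp add: mult.assoc mult.commute)
    have \<psi>: "\<psi> (1 - t * y) * \<psi> (inverse (1 - y)) = \<psi> ((1 - t * y) / (1 - y))"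
      using m(2) by (simp add: divide_inverse)
    show "\<chi> (t * y) * \<psi> (1 - t * y) * (\<chi> (inverse y) * \<psi> (inverse (1 - y)))
        = \<chi> t * \<psi> ((1 - t * y) / (1 - y))"
      by (simp only: \<chi>[symmetric] \<psi>[symmetric] mult_ac)
  qed
  finally show ?thesis .
qed

lemma jacobi_times_cnj_jacobi:
  fixes \<chi> \<psi> :: "'a::{finite,field} \<Rightarrow> complex"
  assumes m: "mult_char \<chi>" "mult_char \<psi>"
    and nt: "nontrivial_char \<chi>" "nontrivial_char \<psi>" "nontrivial_char (char_mult \<chi> \<psi>)"
  shows "jacobi \<chi> \<psi> * cnj (jacobi \<chi> \<psi>) = of_nat (card (UNIV :: 'a set))"
proof -
  let ?Y = "UNIV - {0::'a, 1}" and ?q = "of_nat (card (UNIV :: 'a set)) :: complex"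
  have "jacobi \<chi> \<psi> * cnj (jacobi \<chi> \<psi>)
      = (\<Sum>y\<in>UNIV. jacobi \<chi> \<psi> * (\<chi> (inverse y) * \<psi> (inverse (1 - y))))"
    unfolding jacobi_def[of \<chi> \<psi>, THEN arg_cong[where f=cnj]] cnj_sum complex_cnj_mult
      cnj_mult_char[OF m(1)] cnj_mult_char[OF m(2)] sum_distrib_left ..
  also have "\<dots> = (\<Sum>y\<in>?Y. \<Sum>t\<in>UNIV. \<chi> t * \<psi> ((1 - t * y) / (1 - y)))"
    by (rule sum.mono_neutral_cong_right) (use m jacobi_times_char_values[OF m] in auto)
  also have "\<dots> = (\<Sum>t\<in>UNIV. \<chi> t * ((if t = 1 then ?q else 0) - 1 - \<psi> t))"
    by (subst sum.swap) (simp add: sum_distrib_left[symmetric] sum_mult_char_fractional_linear[OF m(2) nt(2)])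
  also have "\<dots> = (\<Sum>t\<in>UNIV. (if t = 1 then ?q else 0) - \<chi> t - char_mult \<chi> \<psi> t)"
    by (rule sum.cong) (use m(1) in \<open>auto simp: char_mult_def algebra_simps\<close>)
  also have "\<dots> = ?q"
    using sum_mult_char_eq_0[OF m(1) nt(1)] sum_mult_char_eq_0[OF mult_char_char_mult[OF m] nt(3)]
    by (simp add: sum_subtractf)
  finally show ?thesis .
qed

lemma jacobi_nonzero:
  fixes \<chi> \<psi> :: "'a::{finite,field} \<Rightarrow> complex"
  assumes "mult_char \<chi>" "mult_char \<psi>"
    and "nontrivial_char \<chi>" "nontrivial_char \<psi>" "nontrivial_char (char_mult \<chi> \<psi>)"
  shows "jacobi \<chi> \<psi> \<noteq> 0"
  using jacobi_times_cnj_jacobi[OF assms] card_field_ge_2[where 'a='a] by auto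

section \<open>Closed forms of the normalized functions\<close>

lemma F21_eq_P21_div_P21_zero:
  assumes "mult_char A"
  shows "F21 A B C z = P21 A B C z / P21 A B C 0"
  using assms
  by (simp add: F21_def P21_def jacobi_def char_mult_def char_conj_def mult_ac)

definition root_sum :: "('a::{finite,field} \<Rightarrow> complex) \<Rightarrow> 'a \<Rightarrow> 'a \<Rightarrow> complex" where
  "root_sum X c v = (\<Sum>w | w ^ 2 = v. X (inverse (c * (1 + w))) ^ 2)"

lemma root_sum_scale: "mult_char X \<Longrightarrow> root_sum X c v = X (inverse c) ^ 2 * root_sum X 1 v"
  by (simp add: root_sum_def sum_distrib_left power_mult_distrib)

lemma root_sum_one_one:
  assumes "(2::'a::{finite,field}) \<noteq> 0" "mult_char X"
  shows "root_sum X 1 (1::'a) = X (inverse 2) ^ 2"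
proof -
  have "{w::'a. w ^ 2 = 1} = {1, -1}" using square_roots_of_square[of "1::'a"] by simp
  moreover have "(1::'a) \<noteq> -1" using neg_neq_self[OF assms(1), of 1] by auto
  ultimately show ?thesis using assms(2) by (simp add: root_sum_def)
qed

locale nonquadratic_char =
  fixes A :: "'a::{finite,field} \<Rightarrow> complex"
  assumes two: "(2::'a) \<noteq> 0"
    and mult_char: "mult_char A"
    and nontrivial: "nontrivial_char A"
    and nonquadratic: "nontrivial_char (char_mult A qchar)"
begin

lemmas A_mult [simp] = mult_char_mult[OF mult_char]
lemmas A_zero [simp] = mult_char_zero[OF mult_char]
lemmas A_one [simp] = mult_char_one[OF mult_char]
lemmas qchar_mult [simp] = mult_char_mult[OF mult_char_qchar[OF two]]

definition Pphi :: "'a \<Rightarrow> complex" where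
  "Pphi l = (\<Sum>y\<in>UNIV. qchar y * A (y * inverse (1 - y) * inverse (1 - l * y)))"

lemma P21_eq_Pphi: "P21 A (char_mult A qchar) qchar l = Pphi l"
  unfolding P21_def Pphi_def
proof (rule sum.cong[OF refl])
  fix y :: 'a
  show "char_mult A qchar y * char_mult (char_conj (char_mult A qchar)) qchar (1 - y)
      * char_conj A (1 - l * y) = qchar y * A (y * inverse (1 - y) * inverse (1 - l * y))"
  proof (cases "y = 1")
    case False
    hence "qchar (1 - y) * qchar (1 - y) = (1 :: complex)" by (simp add: qchar_times_self)
    thus ?thesis
      using mult_char by (simp add: char_mult_def char_conj_def cnj_mult_char mult_ac)
  qed (simp add: char_mult_def char_conj_def)
qed

lemma Pphi_zero_eq: "Pphi 0 = (\<Sum>k\<in>UNIV. qchar k * A (inverse (k - 1)))"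
  unfolding Pphi_def
proof (rule sum.reindex_bij_witness[where i=inverse and j=inverse])
  fix y :: 'a
  show "qchar (inverse y) * A (inverse (inverse y - 1))
      = qchar y * A (y * inverse (1 - y) * inverse (1 - 0 * y))"
  proof (cases "y = 0")
    case False
    hence "inverse (inverse y - 1) = y * inverse (1 - y)"
      by (cases "y = 1") (auto simp: field_simps)
    thus ?thesis by simp
  qed simp
qed auto

lemma Pphi_zero_nonzero: "Pphi 0 \<noteq> 0"
proof -
  have m: "mult_char (char_mult A qchar)" "mult_char (\<lambda>x. A (inverse x))"
    using mult_char mult_char_qchar[OF two]
    by (auto intro: mult_char_char_mult mult_char_compose_inverse)
  obtain c :: 'a where c: "c \<noteq> 0" "\<not> is_square c" using exists_nonsquare[OF two] by blast
  have "char_mult (char_mult A qchar) (\<lambda>x. A (inverse x)) c = qchar c"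
    using mult_char_inverse[OF mult_char c(1)] by (simp add: char_mult_def mult_ac)
  hence "nontrivial_char (char_mult (char_mult A qchar) (\<lambda>x. A (inverse x)))"
    using c unfolding nontrivial_char_def by (auto simp: qchar_eq)
  hence "jacobi (char_mult A qchar) (\<lambda>x. A (inverse x)) \<noteq> 0"
    using jacobi_nonzero[OF m nonquadratic nontrivial_char_compose_inverse[OF mult_char nontrivial]]
    by blast
  moreover have "jacobi (char_mult A qchar) (\<lambda>x. A (inverse x)) = Pphi 0"
    unfolding jacobi_def Pphi_def by (rule sum.cong) (auto simp: char_mult_def mult_ac)
  ultimately show ?thesis by simp
qed

lemma sum_qchar_A_inverse_eq_0: "(\<Sum>n\<in>UNIV. qchar n * A (inverse n)) = 0"
proof -
  have "mult_char (char_mult A qchar)"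
    using mult_char mult_char_qchar[OF two] by (rule mult_char_char_mult)
  hence "(\<Sum>n\<in>UNIV. char_mult A qchar (inverse n)) = 0"
    using sum_mult_char_eq_0 mult_char_compose_inverse nontrivial_char_compose_inverse nonquadratic
    by blast
  thus ?thesis by (simp add: char_mult_def mult.commute)
qed

lemma sum_qchar_A_inverse_affine:
  assumes w: "w \<noteq> 0"
  shows "(\<Sum>n\<in>UNIV. qchar n * A (inverse (w * n - c ^ 2))) = qchar w * A (inverse c) ^ 2 * Pphi 0"
proof (cases "c = 0")
  case True
  have "(\<Sum>n\<in>UNIV. qchar n * A (inverse (w * n - c ^ 2)))
      = A (inverse w) * (\<Sum>n\<in>UNIV. qchar n * A (inverse n))"
    using True by (simp add: sum_distrib_left algebra_simps)
  thus ?thesis using sum_qchar_A_inverse_eq_0 True by simp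
next
  case False
  have "(\<Sum>n\<in>UNIV. qchar n * A (inverse (w * n - c ^ 2)))
      = (\<Sum>k\<in>UNIV. qchar (c ^ 2 * k / w) * A (inverse (w * (c ^ 2 * k / w) - c ^ 2)))"
    by (rule sum.reindex_bij_witness[where j="\<lambda>n. n * w / c ^ 2" and i="\<lambda>k. c ^ 2 * k / w"])
       (use w False in auto)
  also have "\<dots> = (\<Sum>k\<in>UNIV. qchar w * A (inverse c) ^ 2 * (qchar k * A (inverse (k - 1))))"
  proof (rule sum.cong[OF refl])
    fix k :: 'a
    have "inverse (w * (c ^ 2 * k / w) - c ^ 2) = inverse c * inverse c * inverse (k - 1)"
      using w by (simp add: field_simps power2_eq_square)
    moreover have "qchar (c ^ 2 * k / w) = qchar w * (qchar k :: complex)"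
      using False by (simp add: divide_inverse mult.commute)
    ultimately show "qchar (c ^ 2 * k / w) * A (inverse (w * (c ^ 2 * k / w) - c ^ 2))
        = qchar w * A (inverse c) ^ 2 * (qchar k * A (inverse (k - 1)))"
      by (simp add: power2_eq_square mult_ac)
  qed
  also have "\<dots> = qchar w * A (inverse c) ^ 2 * Pphi 0"
    by (simp add: Pphi_zero_eq sum_distrib_left)
  finally show ?thesis .
qed

text \<open>The inversion \<open>y \<mapsto> 1 / (l y)\<close> changes the sign of every term when \<open>l\<close> is a nonsquare.\<close>
lemma Pphi_nonsquare:
  assumes l: "l \<noteq> 0" "\<not> is_square l"
  shows "Pphi l = 0"
proof -
  let ?f = "\<lambda>y. qchar y * A (y * inverse (1 - y) * inverse (1 - l * y))"
  have "Pphi l = (\<Sum>y\<in>UNIV. ?f (inverse (l * y)))"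
    unfolding Pphi_def
    by (rule sum.reindex_bij_witness[where i="\<lambda>y. inverse (l * y)" and j="\<lambda>y. inverse (l * y)"])
       (use l in \<open>auto simp: field_simps\<close>)
  also have "\<dots> = (\<Sum>y\<in>UNIV. - ?f y)"
  proof (rule sum.cong[OF refl])
    fix y :: 'a
    show "?f (inverse (l * y)) = - ?f y"
    proof (cases "y = 0 \<or> y = 1 \<or> l * y = 1")
      case False
      hence "inverse (l * y) * inverse (1 - inverse (l * y)) * inverse (1 - l * inverse (l * y))
           = y * inverse (1 - y) * inverse (1 - l * y)"
        using l by (simp add: field_simps)
      moreover have "qchar l = (-1 :: complex)" using l by (simp add: qchar_eq)
      ultimately show ?thesis by simp
    qed (use l in \<open>auto simp del: inverse_mult_distrib\<close>)
  qed
  finally show ?thesis unfolding Pphi_def sum_negf by simp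
qed

lemma Pphi_square_eq_sum_reciprocal:
  assumes w: "w \<noteq> 0"
  shows "Pphi (w ^ 2) = qchar w * (\<Sum>t\<in>UNIV - {0}. qchar t * A (inverse (w * (t + inverse t) - 1 - w ^ 2)))"
proof -
  have "Pphi (w ^ 2) = (\<Sum>t\<in>UNIV. qchar (t / w) * A (t / w * inverse (1 - t / w) * inverse (1 - w ^ 2 * (t / w))))"
    unfolding Pphi_def
    by (rule sum.reindex_bij_witness[where i="\<lambda>t. t / w" and j="\<lambda>y. y * w"]) (use w in auto)
  also have "\<dots> = qchar w * (\<Sum>t\<in>UNIV - {0}. qchar t * A (inverse (w * (t + inverse t) - 1 - w ^ 2)))"
    unfolding sum_distrib_left
  proof (rule sum.mono_neutral_cong_right)
    fix t :: 'a assume "t \<in> UNIV - {0}"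
    hence t: "t \<noteq> 0" by simp
    have "t / w * inverse (1 - t / w) * inverse (1 - w ^ 2 * (t / w)) = inverse (w * (t + inverse t) - 1 - w ^ 2)"
    proof (cases "w = t \<or> w * t = 1")
      case True
      thus ?thesis using w t by (auto simp: field_simps power2_eq_square)
    next
      case False
      hence "w - t \<noteq> 0" "1 - w * t \<noteq> 0" by auto
      thus ?thesis using w t by (simp add: field_simps power2_eq_square)
    qed
    thus "qchar (t / w) * A (t / w * inverse (1 - t / w) * inverse (1 - w ^ 2 * (t / w)))
        = qchar w * (qchar t * A (inverse (w * (t + inverse t) - 1 - w ^ 2)))"
      by (simp add: divide_inverse mult_ac)
  qed auto
  finally show ?thesis .
qed

lemma Pphi_square:
  assumes w: "w \<noteq> 0"
  shows "Pphi (w ^ 2) = Pphi 0 * (A (inverse (1 + w)) ^ 2 + A (inverse (1 - w)) ^ 2)"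
proof -
  let ?H = "\<lambda>m. A (inverse (w * m - 1 - w ^ 2))"
  have "(\<Sum>m\<in>UNIV. qchar (m + 2) * ?H m) = (\<Sum>n\<in>UNIV. qchar n * A (inverse (w * n - (1 + w) ^ 2)))"
    by (rule sum.reindex_bij_witness[where j="\<lambda>m. m + 2" and i="\<lambda>n. n - 2"])
       (auto simp: algebra_simps power2_eq_square)
  moreover have "(\<Sum>m\<in>UNIV. qchar (m - 2) * ?H m) = (\<Sum>n\<in>UNIV. qchar n * A (inverse (w * n - (1 - w) ^ 2)))"
    by (rule sum.reindex_bij_witness[where j="\<lambda>m. m - 2" and i="\<lambda>n. n + 2"])
       (auto simp: algebra_simps power2_eq_square)
  ultimately have "Pphi (w ^ 2) = qchar w * ((\<Sum>n\<in>UNIV. qchar n * A (inverse (w * n - (1 + w) ^ 2)))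
      + (\<Sum>n\<in>UNIV. qchar n * A (inverse (w * n - (1 - w) ^ 2))))"
    unfolding Pphi_square_eq_sum_reciprocal[OF w] sum_qchar_reciprocal_sum[OF two, of ?H]
    by (simp add: distrib_right sum.distrib)
  thus ?thesis
    unfolding sum_qchar_A_inverse_affine[OF w] using qchar_times_self[OF w] by algebra
qed

lemma Pphi_eq_root_sum: "Pphi l = Pphi 0 * root_sum A 1 l"
proof -
  consider "l = 0" | u where "u ^ 2 = l" "u \<noteq> 0" | "l \<noteq> 0" "\<not> is_square l"
    unfolding is_square_def by fastforce
  thus ?thesis
  proof cases
    case 1
    hence "{w::'a. w ^ 2 = l} = {0}" by auto
    thus ?thesis using 1 by (simp add: root_sum_def)
  next
    case 2
    hence "{w. w ^ 2 = l} = {u, -u}" using square_roots_of_square[of u] by simp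
    moreover have "- u \<noteq> u" using neg_neq_self[OF two \<open>u \<noteq> 0\<close>] .
    ultimately show ?thesis using Pphi_square[OF \<open>u \<noteq> 0\<close>] 2 by (simp add: root_sum_def)
  next
    case 3
    hence "{w::'a. w ^ 2 = l} = {}" by (auto simp: is_square_def)
    thus ?thesis using Pphi_nonsquare[OF 3] by (simp add: root_sum_def)
  qed
qed

lemma F21_phi_eq_root_sum: "F21 A (char_mult A qchar) qchar z = root_sum A 1 z"
  unfolding F21_eq_P21_div_P21_zero[OF mult_char] P21_eq_Pphi Pphi_eq_root_sum[of z]
  using Pphi_zero_nonzero by simp

lemma P21_square_summand:
  "char_mult A qchar y * char_mult (char_conj (char_mult A qchar)) (char_pow A 2) (1 - y)
     * char_conj A (1 - z * y)
   = qchar y * qchar (1 - y) * A (y * (1 - y) * inverse (1 - z * y))"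
proof (cases "y = 1")
  case False
  hence "A (inverse (1 - y)) * A (1 - y) ^ 2 = A (1 - y)"
    using mult_char_inverse[OF mult_char, of "1 - y"] by (simp add: power2_eq_square mult.assoc[symmetric])
  thus ?thesis
    using mult_char by (simp add: char_mult_def char_conj_def char_pow_def cnj_mult_char mult_ac)
qed (simp add: char_mult_def char_conj_def)

text \<open>A Pasternack-type transformation, induced by the involution \<open>y \<mapsto> y / (y - 1)\<close>.\<close>
lemma Pphi_one_minus: "Pphi (1 - z) = A (-1) * qchar (-1::'a) * P21 A (char_mult A qchar) (char_pow A 2) z"
proof -
  let ?h = "\<lambda>y::'a. if y = 1 then 1 else y / (y - 1)"
  have h_involution: "?h (?h y) = y" for y
    by (cases "y = 1") (auto simp: field_simps)
  have "Pphi (1 - z) = (\<Sum>y\<in>UNIV. qchar (?h y) * A (?h y * inverse (1 - ?h y) * inverse (1 - (1 - z) * ?h y)))"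
    unfolding Pphi_def by (rule sum.reindex_bij_witness[where i="?h" and j="?h"]) (use h_involution in auto)
  also have "\<dots> = (\<Sum>y\<in>UNIV. A (-1) * qchar (-1::'a) * (qchar y * qchar (1 - y) * A (y * (1 - y) * inverse (1 - z * y))))"
  proof (rule sum.cong[OF refl])
    fix y :: 'a
    show "qchar (?h y) * A (?h y * inverse (1 - ?h y) * inverse (1 - (1 - z) * ?h y))
        = A (-1) * qchar (-1::'a) * (qchar y * qchar (1 - y) * A (y * (1 - y) * inverse (1 - z * y)))"
    proof (cases "y = 1")
      case False
      hence "1 - ?h y = inverse (1 - y)"
        and "1 - (1 - z) * ?h y = (1 - z * y) / (1 - y)"
        and "?h y * (1 - y) = - y"
        by (simp_all add: field_simps)
      hence "inverse (1 - ?h y) = 1 - y"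
        and "inverse (1 - (1 - z) * ?h y) = (1 - y) * inverse (1 - z * y)"
        and "?h y * (1 - y) = - y"
        by (simp_all add: divide_inverse mult.commute)
      hence "?h y * inverse (1 - ?h y) * inverse (1 - (1 - z) * ?h y) = -1 * (y * (1 - y) * inverse (1 - z * y))"
        by (simp add: mult.assoc[symmetric])
      moreover have "?h y = -1 * (y * inverse (1 - y))"
        using False by (simp add: field_simps)
      ultimately show ?thesis by (simp only: A_mult qchar_mult qchar_inverse) (simp add: mult_ac)
    qed simp
  qed
  finally show ?thesis
    unfolding P21_def P21_square_summand by (simp add: sum_distrib_left)
qed

lemma F21_square_eq_root_sum:
  "F21 A (char_mult A qchar) (char_pow A 2) z = root_sum A (inverse 2) (1 - z)"
proof -
  let ?c = "A (-1) * qchar (-1::'a)"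
  have "?c * ?c = 1"
    using mult_char_minus_one_squared[OF mult_char] qchar_times_self[of "-1::'a"] by (simp add: mult_ac)
  moreover have "?c * Pphi (1 - x) = ?c * ?c * P21 A (char_mult A qchar) (char_pow A 2) x" for x
    unfolding Pphi_one_minus by (simp only: mult.assoc)
  ultimately have P21_eq: "P21 A (char_mult A qchar) (char_pow A 2) x = ?c * Pphi (1 - x)" for x
    by simp
  have "?c \<noteq> 0" using \<open>?c * ?c = 1\<close> by auto
  have "F21 A (char_mult A qchar) (char_pow A 2) z = (?c * Pphi (1 - z)) / (?c * Pphi (1 - 0))"
    unfolding F21_eq_P21_div_P21_zero[OF mult_char] P21_eq ..
  also have "\<dots> = root_sum A 1 (1 - z) / A (inverse 2) ^ 2"
    using \<open>?c \<noteq> 0\<close> Pphi_zero_nonzero root_sum_one_one[OF two mult_char]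
    by (simp add: Pphi_eq_root_sum[of "1 - z"] Pphi_eq_root_sum[of 1])
  also have "\<dots> = root_sum A (inverse 2) (1 - z)"
  proof -
    have "A (inverse 2) ^ 2 * A 2 ^ 2 = 1"
      using mult_char_inverse[OF mult_char two] by (simp flip: power_mult_distrib)
    thus ?thesis
      by (simp only: divide_inverse inverse_unique root_sum_scale[OF mult_char, of "inverse 2"]
          inverse_inverse_eq mult.commute)
  qed
  finally show ?thesis .
qed

end

lemma char_order_gt_2_imp_nonquadratic_char:
  fixes X :: "'a::{finite,field} \<Rightarrow> complex"
  assumes two: "(2::'a) \<noteq> 0" and X: "mult_char X" and order: "char_order X > 2"
  shows "nonquadratic_char X"
proof
  have small: "\<not> (\<forall>x. x \<noteq> 0 \<longrightarrow> X x ^ n = 1)" if "0 < n" "n \<le> 2" for n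
    using that order not_less_Least[of n "\<lambda>n. n > 0 \<and> (\<forall>x. x \<noteq> 0 \<longrightarrow> X x ^ n = 1)"]
    unfolding char_order_def by auto
  obtain a :: 'a where a: "a \<noteq> 0" "X a \<noteq> 1" using small[of 1] by auto
  obtain b :: 'a where b: "b \<noteq> 0" "X b ^ 2 \<noteq> 1" using small[of 2] by auto
  from a show "nontrivial_char X" unfolding nontrivial_char_def by blast
  have "(X b * qchar b) ^ 2 = X b ^ 2"
    using qchar_times_self[OF b(1)] by (simp add: power2_eq_square mult_ac)
  with b show "nontrivial_char (char_mult X qchar)"
    unfolding nontrivial_char_def char_mult_def by (metis power_one)
qed (fact two X)+

section \<open>The product formulas\<close>

lemma inverse_square_mult_cancel:
  assumes "mult_char A" "mult_char B"
  shows "A (inverse x) ^ 2 * (B (inverse x) * B x) ^ 2 = A (inverse x) ^ 2"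
  using assms mult_char_inverse[OF assms(2), of x] by (cases "x = 0") simp_all

lemma two_point_product_identity:
  assumes A: "mult_char A" and B: "mult_char B"
  shows "(A (inverse p) ^ 2 + A (inverse m) ^ 2) * (B (inverse p) ^ 2 + B (inverse m) ^ 2)
       = (A (inverse p) * B (inverse p)) ^ 2 + (A (inverse m) * B (inverse m)) ^ 2
         + B (inverse (p * m)) ^ 2 * ((A (inverse p) * B p) ^ 2 + (A (inverse m) * B m) ^ 2)"
proof -
  have "B (inverse (p * m)) ^ 2 * ((A (inverse p) * B p) ^ 2 + (A (inverse m) * B m) ^ 2)
      = B (inverse m) ^ 2 * (A (inverse p) ^ 2 * (B (inverse p) * B p) ^ 2)
        + B (inverse p) ^ 2 * (A (inverse m) ^ 2 * (B (inverse m) * B m) ^ 2)"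
    using B by (simp add: algebra_simps)
  also have "\<dots> = B (inverse m) ^ 2 * A (inverse p) ^ 2 + B (inverse p) ^ 2 * A (inverse m) ^ 2"
    by (simp only: inverse_square_mult_cancel[OF A B])
  finally show ?thesis by (simp add: algebra_simps)
qed

lemma root_sum_product:
  fixes A B :: "'a::{finite,field} \<Rightarrow> complex"
  assumes two: "(2::'a) \<noteq> 0" and A: "mult_char A" and B: "mult_char B" and c: "c \<noteq> 0"
  shows "root_sum A c v * root_sum B c v
       = root_sum (char_mult A B) c v
         + B (inverse (c * c * (1 - v))) ^ 2 * root_sum (char_mult A (char_conj B)) c v
         - (if v = 0 then (A (inverse c) * B (inverse c)) ^ 2 else 0)"
proof -
  have conj_B: "char_conj B x = B (inverse x)" for x by (rule char_conj_eq_compose_inverse[OF B])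
  consider "v = 0" | u where "u ^ 2 = v" "u \<noteq> 0" | "v \<noteq> 0" "\<not> is_square v"
    unfolding is_square_def by fastforce
  thus ?thesis
  proof cases
    case 1
    hence roots: "{w::'a. w ^ 2 = v} = {0}" by auto
    have "B (inverse (c * c)) ^ 2 * (A (inverse c) * B c) ^ 2
        = B (inverse c) ^ 2 * (A (inverse c) ^ 2 * (B (inverse c) * B c) ^ 2)"
      using B by (simp add: power_mult_distrib)
    also have "\<dots> = B (inverse c) ^ 2 * A (inverse c) ^ 2"
      by (simp only: inverse_square_mult_cancel[OF A B])
    finally show ?thesis
      using 1 by (simp add: root_sum_def roots char_mult_def conj_B power_mult_distrib) metis
  next
    case 2
    hence roots: "{w. w ^ 2 = v} = {u, -u}" using square_roots_of_square[of u] by simp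
    have ne: "- u \<noteq> u" using neg_neq_self[OF two \<open>u \<noteq> 0\<close>] .
    define p where "p = c * (1 + u)"
    define m where "m = c * (1 + - u)"
    have "c * c * (1 - v) = p * m"
      unfolding p_def m_def using 2 by (simp add: algebra_simps power2_eq_square)
    moreover have "root_sum X c v = X (inverse p) ^ 2 + X (inverse m) ^ 2" for X
      unfolding root_sum_def roots p_def m_def using ne by simp
    moreover have "v \<noteq> 0" using 2 by auto
    ultimately show ?thesis
      using two_point_product_identity[OF A B, of p m] by (simp add: char_mult_def conj_B)
  next
    case 3
    hence "{w::'a. w ^ 2 = v} = {}" by (auto simp: is_square_def)
    thus ?thesis using 3 by (simp add: root_sum_def)
  qed
qed

lemma root_sum_product_half:
  fixes A B :: "'a::{finite,field} \<Rightarrow> complex"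
  assumes two: "(2::'a) \<noteq> 0" and A: "mult_char A" and B: "mult_char B"
  shows "root_sum A (inverse 2) (1 - z) * root_sum B (inverse 2) (1 - z)
       = root_sum (char_mult A B) (inverse 2) (1 - z)
         + char_pow (char_conj B) 2 (z / 4) * root_sum (char_mult A (char_conj B)) (inverse 2) (1 - z)
         - kdelta (1 - z) * char_mult A B 4"
proof -
  have "inverse 2 * inverse 2 * (1 - (1 - z)) = z / (4::'a)"
    by (simp add: field_simps)
  moreover have "(A (inverse (inverse 2)) * B (inverse (inverse 2))) ^ 2 = char_mult A B (4::'a)"
    using mult_char_mult[OF A, of 2 2] mult_char_mult[OF B, of 2 2]
    by (simp add: char_mult_def power2_eq_square mult_ac)
  ultimately show ?thesis
    using root_sum_product[OF two A B, of "inverse 2" "1 - z"] two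
    by (simp add: char_pow_def char_conj_eq_compose_inverse[OF B] kdelta_def)
qed

lemma root_sum_product_one:
  fixes A B :: "'a::{finite,field} \<Rightarrow> complex"
  assumes two: "(2::'a) \<noteq> 0" and A: "mult_char A" and B: "mult_char B"
  shows "root_sum A 1 z * root_sum B 1 z
       = root_sum (char_mult A B) 1 z
         + char_pow (char_conj B) 2 (1 - z) * root_sum (char_mult A (char_conj B)) 1 z
         - kdelta z"
  using root_sum_product[OF two A B, of 1 z] A B
  by (simp add: char_pow_def char_conj_eq_compose_inverse[OF B] kdelta_def)

theorem mainTheorem6:
  fixes A B :: "'a::{finite,field} \<Rightarrow> complex"
  assumes odd_char: "(2::'a) \<noteq> 0"
    and A: "mult_char A" and B: "mult_char B"
    and oA: "char_order A > 2" and oB: "char_order B > 2"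
    and oAB: "char_order (char_mult A B) > 2"
    and oAcB: "char_order (char_mult A (char_conj B)) > 2"
  shows "(\<forall>z::'a.
     F21 A (char_mult A qchar) (char_pow A 2) z * F21 B (char_mult B qchar) (char_pow B 2) z
       = F21 (char_mult A B) (char_mult (char_mult A B) qchar) (char_pow (char_mult A B) 2) z
         + char_pow (char_conj B) 2 (z / 4) *
           F21 (char_mult A (char_conj B)) (char_mult (char_mult A (char_conj B)) qchar)
               (char_pow (char_mult A (char_conj B)) 2) z
         - kdelta (1 - z) * char_mult A B 4)
    \<and> (\<forall>z::'a.
     F21 A (char_mult A qchar) qchar z * F21 B (char_mult B qchar) qchar z
       = F21 (char_mult A B) (char_mult (char_mult A B) qchar) qchar z
         + char_pow (char_conj B) 2 (1 - z) *
           F21 (char_mult A (char_conj B)) (char_mult (char_mult A (char_conj B)) qchar) qchar z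
         - kdelta z)"
proof -
  note nonquadratic = char_order_gt_2_imp_nonquadratic_char[OF odd_char]
  note F21_square = nonquadratic_char.F21_square_eq_root_sum[OF nonquadratic]
  note F21_phi = nonquadratic_char.F21_phi_eq_root_sum[OF nonquadratic]
  have AB: "mult_char (char_mult A B)" and AcB: "mult_char (char_mult A (char_conj B))"
    using A B by (simp_all add: mult_char_char_mult mult_char_char_conj)
  show ?thesis
    unfolding F21_square[OF A oA] F21_square[OF B oB] F21_square[OF AB oAB] F21_square[OF AcB oAcB]
      F21_phi[OF A oA] F21_phi[OF B oB] F21_phi[OF AB oAB] F21_phi[OF AcB oAcB]
    using root_sum_product_half[OF odd_char A B] root_sum_product_one[OF odd_char A B] by blast
qed

end
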